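(* Let $S$ be a finite set of $m\ge 1$ discrete probability distributions and let $\mathcal G_S$ be the output of the greedy coupling algorithm on $S$. Then $$H(\mathcal G_S)\le H(\textsc{Profile}_S)+\frac{1+\log_2 e}{2}.$$
   Context: Distributions are finite vectors of nonnegative reals summing to $1$, with states sorted in non-increasing order. Greedy coupling algorithm: maintain the remaining masses of the states of each distribution in $S$. Repeatedly: let $r=\min_{p\in S}\max_j p(j)$; if $r=0$ stop; otherwise append $r$ as the next state of $\mathcal G_S$ and subtract $r$ from the largest remaining state of every distribution in $S$ (ties broken arbitrarily). $\mathcal G_S$ is the resulting sequence of state masses, with $H(\mathcal G_S)=\sum_t \mathcal G_S(t)\log_2(1/\mathcal G_S(t))$. For a distribution $p$, $\textsc{Sketch}_p:(0,1]\to\mathbb R$ is $\textsc{Sketch}_p(x)=p(i)$ for $x\in(\sum_{j>i}p(j),\sum_{j\ge i}p(j)]$; $\textsc{Profile}_S(x)=\min_{p\in S}\textsc{Sketch}_p(x)$; and $H(\textsc{Profile}_S)=\int_0^{1}\log_2(1/\textsc{Profile}_S(x))\,dx$. *)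

theory Defs
  imports "HOL-Analysis.Analysis"
begin

definition is_dist :: "real list \<Rightarrow> bool" where
  "is_dist p \<longleftrightarrow> (\<forall>x\<in>set p. 0 \<le> x) \<and> sum_list p = 1 \<and> sorted_wrt (\<ge>) p"

definition max_state :: "real list \<Rightarrow> real" where
  "max_state q = Max (insert 0 (set q))"

text \<open>Subtract r from a largest remaining state (the first index attaining the
  maximum; any tie-breaking yields the same multiset of remaining masses).\<close>
definition sub_max :: "real \<Rightarrow> real list \<Rightarrow> real list" where
  "sub_max r q = (let i = (LEAST i. i < length q \<and> q ! i = max_state q) in q[i := q ! i - r])"

primrec greedy_run :: "nat \<Rightarrow> real list set \<Rightarrow> real list" where
  "greedy_run 0 Q = []"
| "greedy_run (Suc n) Q =
     (let r = Min (max_state ` Q) in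
      if r = 0 then [] else r # greedy_run n (sub_max r ` Q))"

text \<open>The greedy coupling G_S. Each step zeroes at least one nonzero remaining
  state, so the total number of states is a sufficient step bound and the run
  always stops by reaching r = 0.\<close>
definition greedy_coupling :: "real list set \<Rightarrow> real list" where
  "greedy_coupling S = greedy_run (\<Sum>p\<in>S. length p) S"

definition entropy_list :: "real list \<Rightarrow> real" where
  "entropy_list g = sum_list (map (\<lambda>x. x * log 2 (1 / x)) g)"

definition sketch :: "real list \<Rightarrow> real \<Rightarrow> real" where
  "sketch p x = (THE v. \<exists>i<length p. sum_list (drop (Suc i) p) < x \<and>
                         x \<le> sum_list (drop i p) \<and> v = p ! i)"

definition profile :: "real list set \<Rightarrow> real \<Rightarrow> real" where
  "profile S x = Min ((\<lambda>p. sketch p x) ` S)"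

definition profile_entropy :: "real list set \<Rightarrow> real" where
  "profile_entropy S = integral {0..1} (\<lambda>x. log 2 (1 / profile S x))"

end

theory Submission
  imports Defs
begin

text \<open>Fix a threshold v > 0. While the greedy step r is at least v, every state
  of every distribution in S either is untouched or has lost at least v; at the first
  step r < v, the vector attaining r still holds all the mass that the coupling has
  yet to output. Hence the greedy states below v have total mass at most the sum
  of a \<kappa>(v,a) over the states a of some p \<in> S, where \<kappa>(v,a) = 1 for a < v
  and min(v/a, 1/2) otherwise; as \<kappa>(v,-) is antitone and the profile lies below
  every sketch, this is at most \<integral> \<kappa>(v, Profile_S(x)) dx.
  Substituting v = 2^-s and integrating over s, the left side becomes H(G_S)
  (layer cake), while \<integral> \<kappa>(2^-s, a) ds \<le> log(1/a) + 1/2 + 1/(2 ln 2).\<close>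

section \<open>Greedy coupling\<close>

lemma is_dist_nonneg: "is_dist p \<Longrightarrow> \<forall>x\<in>set p. 0 \<le> x"
  unfolding is_dist_def by auto

lemma is_dist_sum: "is_dist p \<Longrightarrow> sum_list p = 1"
  unfolding is_dist_def by auto

lemma max_state_nonneg: "0 \<le> max_state q"
  unfolding max_state_def by (simp add: Max_ge_iff)

lemma max_state_ge: "x \<in> set q \<Longrightarrow> x \<le> max_state q"
  unfolding max_state_def by (simp add: Max_ge_iff)

lemma max_state_in_set: "0 < max_state q \<Longrightarrow> max_state q \<in> set q"
  unfolding max_state_def using Max_in[of "insert 0 (set q)"] by auto

lemma sub_max_eq_list_update:
  assumes "0 < max_state q"
  obtains i where "i < length q" "q ! i = max_state q" "sub_max r q = q[i := q ! i - r]"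
proof -
  let ?P = "\<lambda>i. i < length q \<and> q ! i = max_state q"
  obtain k where "?P k"
    using max_state_in_set[OF assms] by (auto simp: in_set_conv_nth)
  then have "?P (LEAST i. ?P i)" by (rule LeastI)
  then show thesis by (intro that[of "LEAST i. ?P i"]) (auto simp: sub_max_def)
qed

lemma sum_list_list_update:
  fixes q :: "'a::ab_group_add list"
  shows "i < length q \<Longrightarrow> sum_list (q[i := x]) = sum_list q - q ! i + x"
  by (induction q arbitrary: i) (auto split: nat.splits)

lemma sum_list_sub_max: "0 < max_state q \<Longrightarrow> sum_list (sub_max r q) = sum_list q - r"
proof -
  assume "0 < max_state q"
  then obtain i where "i < length q" "sub_max r q = q[i := q ! i - r]"
    by (rule sub_max_eq_list_update)
  then show ?thesis by (simp add: sum_list_list_update)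
qed

lemma sum_list_filter_le:
  fixes xs :: "'a::ordered_comm_monoid_add list"
  shows "(\<And>x. x \<in> set xs \<Longrightarrow> 0 \<le> x) \<Longrightarrow> sum_list (filter P xs) \<le> sum_list xs"
  by (induction xs) (auto intro: add_increasing order.trans add_mono)

lemma sub_max_nonneg:
  assumes "r \<le> max_state q" "0 < r" "\<forall>x\<in>set q. 0 \<le> x"
  shows "\<forall>x\<in>set (sub_max r q). 0 \<le> x"
proof -
  obtain i where i: "i < length q" "q ! i = max_state q" "sub_max r q = q[i := q ! i - r]"
    using sub_max_eq_list_update[of q r] assms(1,2) by auto
  have "0 \<le> (q[i := q ! i - r]) ! j" if "j < length q" for j
    using assms i that by (cases "j = i") (auto simp: nth_list_update)
  then show ?thesis
    using i by (auto simp: in_set_conv_nth)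
qed

lemma greedy_run_pos:
  assumes "finite Q" "Q \<noteq> {}"
  shows "\<forall>x\<in>set (greedy_run n Q). 0 < x"
  using assms
proof (induction n arbitrary: Q)
  case (Suc n)
  define r where "r = Min (max_state ` Q)"
  have "0 \<le> r"
    using Suc.prems by (simp add: r_def max_state_nonneg)
  moreover have "\<forall>x\<in>set (greedy_run n (sub_max r ` Q)). 0 < x"
    using Suc by (intro Suc.IH) auto
  ultimately show ?case
    by (auto simp: r_def[symmetric] Let_def)
qed simp

lemma sum_list_greedy_run_le:
  assumes "finite Q" "Q \<noteq> {}" "\<forall>q\<in>Q. sum_list q = T \<and> (\<forall>x\<in>set q. 0 \<le> x)"
  shows "sum_list (greedy_run n Q) \<le> T"
  using assms
proof (induction n arbitrary: Q T)
  case 0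
  then obtain q where "q \<in> Q" "sum_list q = T" "\<forall>x\<in>set q. 0 \<le> x" by blast
  then show ?case using sum_list_nonneg[of q] by simp
next
  case (Suc n)
  define r where "r = Min (max_state ` Q)"
  obtain q0 where "q0 \<in> Q" "sum_list q0 = T" "\<forall>x\<in>set q0. 0 \<le> x" using Suc.prems by blast
  then have "0 \<le> T" using sum_list_nonneg[of q0] by simp
  have r_le: "r \<le> max_state q" if "q \<in> Q" for q
    using Suc.prems that unfolding r_def by simp
  show ?case
  proof (cases "r = 0")
    case True
    then show ?thesis using \<open>0 \<le> T\<close> by (simp add: r_def[symmetric])
  next
    case False
    then have "0 < r"
      using Suc.prems by (simp add: r_def max_state_nonneg order_le_neq_trans)
    have "sum_list (sub_max r q) = T - r \<and> (\<forall>x\<in>set (sub_max r q). 0 \<le> x)"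
      if "q \<in> Q" for q
      using Suc.prems r_le[OF that] \<open>0 < r\<close> that
      by (simp add: sum_list_sub_max sub_max_nonneg)
    then have "sum_list (greedy_run n (sub_max r ` Q)) \<le> T - r"
      using Suc.prems by (intro Suc.IH) auto
    then show ?thesis using False by (simp add: r_def[symmetric] Let_def)
  qed
qed

definition mass_below :: "real \<Rightarrow> real list \<Rightarrow> real" where
  "mass_below v g = sum_list (filter (\<lambda>x. x < v) g)"

definition kappa :: "real \<Rightarrow> real \<Rightarrow> real" where
  "kappa v a = (if a < v then 1 else min (v / a) (1 / 2))"

definition kappa_mass :: "real \<Rightarrow> real list \<Rightarrow> real" where
  "kappa_mass v p = sum_list (map (\<lambda>a. a * kappa v a) p)"

definition reduced_by :: "real \<Rightarrow> real list \<Rightarrow> real list \<Rightarrow> bool" where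
  "reduced_by v p q \<longleftrightarrow> length q = length p \<and>
     (\<forall>j<length p. 0 \<le> q ! j \<and> (q ! j = p ! j \<or> q ! j \<le> p ! j - v))"

lemma kappa_nonneg: "0 < v \<Longrightarrow> 0 \<le> kappa v a"
  unfolding kappa_def by auto

lemma kappa_antimono:
  assumes "0 < v" "0 < a" "a \<le> b"
  shows "kappa v b \<le> kappa v a"
proof -
  have "v / b \<le> v / a" using assms by (intro divide_left_mono) auto
  then show ?thesis using assms by (auto simp: kappa_def min_def)
qed

lemma kappa_mass_nonneg: "0 < v \<Longrightarrow> \<forall>x\<in>set p. 0 \<le> x \<Longrightarrow> 0 \<le> kappa_mass v p"
  unfolding kappa_mass_def by (intro sum_list_nonneg) (auto simp: kappa_nonneg)

lemma reduced_by_refl: "\<forall>x\<in>set p. 0 \<le> x \<Longrightarrow> reduced_by v p p"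
  unfolding reduced_by_def by simp

lemma reduced_by_nonneg:
  assumes "reduced_by v p q" "0 < v"
  shows "\<forall>x\<in>set q. 0 \<le> x" "\<forall>x\<in>set p. 0 \<le> x"
proof -
  have "0 \<le> q ! j \<and> 0 \<le> p ! j" if "j < length p" for j
    using assms that unfolding reduced_by_def by force
  then show "\<forall>x\<in>set q. 0 \<le> x" "\<forall>x\<in>set p. 0 \<le> x"
    using assms(1) unfolding reduced_by_def by (auto simp: in_set_conv_nth)
qed

lemma reduced_by_sub_max:
  assumes "reduced_by v p q" "0 < r" "r \<le> max_state q" "v \<le> r"
  shows "reduced_by v p (sub_max r q)"
proof -
  obtain i where "i < length q" "q ! i = max_state q" "sub_max r q = q[i := q ! i - r]"
    using sub_max_eq_list_update[of q r] assms(2,3) by auto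
  then show ?thesis
    using assms unfolding reduced_by_def by (auto simp: nth_list_update)
qed

text \<open>A state that started at a \<ge> v and now holds less than v has lost at
  least v, so it holds at most min(v, a/2) = a * kappa v a.\<close>
lemma sum_list_le_kappa_mass:
  assumes "reduced_by v p q" "max_state q < v" "0 < v"
  shows "sum_list q \<le> kappa_mass v p"
proof -
  have len: "length q = length p" using assms(1) unfolding reduced_by_def by simp
  have "q ! j \<le> p ! j * kappa v (p ! j)" if j: "j < length p" for j
  proof -
    have qj: "0 \<le> q ! j" "q ! j = p ! j \<or> q ! j \<le> p ! j - v"
      using assms(1) j unfolding reduced_by_def by auto
    have "q ! j < v"
      using max_state_ge[of "q ! j" q] assms(2) j len by simp
    show ?thesis
    proof (cases "p ! j < v")
      case True
      then show ?thesis using qj \<open>0 < v\<close> by (auto simp: kappa_def)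
    next
      case False
      then have "q ! j \<le> min v (p ! j / 2)"
        using qj \<open>q ! j < v\<close> by auto
      also have "min v (p ! j / 2) = p ! j * min (v / p ! j) (1 / 2)"
        using False \<open>0 < v\<close> by (simp add: min_def field_simps)
      finally show ?thesis using False by (simp add: kappa_def)
    qed
  qed
  then have "(\<Sum>j<length p. q ! j) \<le> (\<Sum>j<length p. p ! j * kappa v (p ! j))"
    by (intro sum_mono) simp
  then show ?thesis
    using len by (simp add: kappa_mass_def sum_list_sum_nth atLeast0LessThan)
qed

lemma mass_below_greedy_run_le:
  assumes "0 < v" "finite Q" "Q \<noteq> {}" "\<forall>q\<in>Q. sum_list q = T \<and> (\<exists>p\<in>S. reduced_by v p q)"
  shows "\<exists>p\<in>S. mass_below v (greedy_run n Q) \<le> kappa_mass v p"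
  using assms(2-)
proof (induction n arbitrary: Q T)
  case 0
  then obtain q p where "p \<in> S" "reduced_by v p q" by blast
  then have "0 \<le> kappa_mass v p"
    using kappa_mass_nonneg reduced_by_nonneg(2) \<open>0 < v\<close> by blast
  then show ?case
    using \<open>p \<in> S\<close> by (auto simp: mass_below_def)
next
  case (Suc n)
  define r where "r = Min (max_state ` Q)"
  have Q_nonneg: "\<forall>q\<in>Q. sum_list q = T \<and> (\<forall>x\<in>set q. 0 \<le> x)"
    using Suc.prems reduced_by_nonneg \<open>0 < v\<close> by blast
  obtain q_min where q_min: "q_min \<in> Q" "max_state q_min = r"
  proof -
    have "r \<in> max_state ` Q"
      unfolding r_def using Suc.prems by (intro Min_in) auto
    then show thesis using that by blast
  qed
  then obtain p where p: "p \<in> S" "reduced_by v p q_min" "sum_list q_min = T"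
    using Suc.prems by blast
  show ?case
  proof (cases "v \<le> r")
    case True
    then have "0 < r" "r \<noteq> 0" using \<open>0 < v\<close> by auto
    have r_le: "r \<le> max_state q" if "q \<in> Q" for q
      using Suc.prems that unfolding r_def by simp
    have "sum_list (sub_max r q) = T - r \<and> (\<exists>p\<in>S. reduced_by v p (sub_max r q))"
      if "q \<in> Q" for q
      using Suc.prems that r_le[OF that] \<open>0 < r\<close> True
      by (auto simp: sum_list_sub_max intro: reduced_by_sub_max)
    then have "\<exists>p\<in>S. mass_below v (greedy_run n (sub_max r ` Q)) \<le> kappa_mass v p"
      using Suc.prems by (intro Suc.IH[where T = "T - r"]) auto
    then show ?thesis
      using True \<open>r \<noteq> 0\<close> by (simp add: r_def[symmetric] Let_def mass_below_def)
  next
    case False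
    have "mass_below v (greedy_run (Suc n) Q) \<le> sum_list (greedy_run (Suc n) Q)"
      unfolding mass_below_def
      using greedy_run_pos[OF Suc.prems(1,2)] by (intro sum_list_filter_le) fastforce
    also have "\<dots> \<le> T"
      using Suc.prems Q_nonneg by (intro sum_list_greedy_run_le) auto
    also have "\<dots> \<le> kappa_mass v p"
      using sum_list_le_kappa_mass[OF p(2)] q_min False \<open>0 < v\<close> p(3) by simp
    finally show ?thesis using p(1) by blast
  qed
qed

lemma mass_below_greedy_coupling_le:
  assumes "finite S" "S \<noteq> {}" "\<forall>p\<in>S. is_dist p" "0 < v"
  shows "\<exists>p\<in>S. mass_below v (greedy_coupling S) \<le> kappa_mass v p"
proof -
  have "\<forall>q\<in>S. sum_list q = 1 \<and> (\<exists>p\<in>S. reduced_by v p q)"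
    using assms(3) is_dist_sum is_dist_nonneg reduced_by_refl by blast
  then show ?thesis
    unfolding greedy_coupling_def by (rule mass_below_greedy_run_le[OF assms(4,1,2)])
qed

lemma greedy_coupling_pos_le_1:
  assumes "finite S" "S \<noteq> {}" "\<forall>p\<in>S. is_dist p"
  shows "\<forall>g\<in>set (greedy_coupling S). 0 < g \<and> g \<le> 1"
proof
  fix g assume g: "g \<in> set (greedy_coupling S)"
  have pos: "\<forall>x\<in>set (greedy_coupling S). 0 < x"
    unfolding greedy_coupling_def using assms(1,2) by (rule greedy_run_pos)
  have "g \<le> sum_list (greedy_coupling S)"
    using g pos by (intro member_le_sum_list) auto
  also have "\<dots> \<le> 1"
    unfolding greedy_coupling_def
    using assms is_dist_sum is_dist_nonneg by (intro sum_list_greedy_run_le) auto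
  finally show "0 < g \<and> g \<le> 1" using g pos by simp
qed

section \<open>Sketches\<close>

abbreviation tail_sum :: "real list \<Rightarrow> nat \<Rightarrow> real" where
  "tail_sum p i \<equiv> sum_list (drop i p)"

lemma tail_sum_nonneg: "\<forall>x\<in>set p. 0 \<le> x \<Longrightarrow> 0 \<le> tail_sum p i"
  by (intro sum_list_nonneg) (meson in_set_dropD)

lemma tail_sum_antimono:
  assumes "\<forall>x\<in>set p. 0 \<le> x" "i \<le> j"
  shows "tail_sum p j \<le> tail_sum p i"
proof -
  have "drop i p = take (j - i) (drop i p) @ drop j p"
    using assms(2) by (metis append_take_drop_id drop_drop le_add_diff_inverse2)
  then have "tail_sum p i = sum_list (take (j - i) (drop i p)) + tail_sum p j"
    by (metis sum_list_append)
  moreover have "0 \<le> sum_list (take (j - i) (drop i p))"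
    using assms(1) by (intro sum_list_nonneg) (meson in_set_dropD in_set_takeD)
  ultimately show ?thesis by simp
qed

lemma tail_sum_Suc: "i < length p \<Longrightarrow> tail_sum p i = p ! i + tail_sum p (Suc i)"
  by (metis Cons_nth_drop_Suc sum_list.Cons)

lemma sketch_eqI:
  assumes "\<forall>x\<in>set p. 0 \<le> x" "i < length p" "tail_sum p (Suc i) < x" "x \<le> tail_sum p i"
  shows "sketch p x = p ! i"
  unfolding sketch_def
proof (rule the_equality)
  show "\<exists>i'<length p. tail_sum p (Suc i') < x \<and> x \<le> tail_sum p i' \<and> p ! i = p ! i'"
    using assms by blast
next
  fix v assume "\<exists>i'<length p. tail_sum p (Suc i') < x \<and> x \<le> tail_sum p i' \<and> v = p ! i'"
  then obtain i' where i': "tail_sum p (Suc i') < x" "x \<le> tail_sum p i'" "v = p ! i'"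
    by blast
  have "\<not> Suc i' \<le> i"
    using tail_sum_antimono[OF assms(1), of "Suc i'" i] i' assms(3,4) by linarith
  moreover have "\<not> Suc i \<le> i'"
    using tail_sum_antimono[OF assms(1), of "Suc i" i'] i' assms(3,4) by linarith
  ultimately have "i' = i" by simp
  then show "v = p ! i" using i' by simp
qed

lemma tail_sum_interval_exists:
  assumes "\<forall>x\<in>set p. 0 \<le> x" "0 < x" "x \<le> sum_list p"
  shows "\<exists>i<length p. tail_sum p (Suc i) < x \<and> x \<le> tail_sum p i"
  using assms
proof (induction p)
  case (Cons a p)
  show ?case
  proof (cases "x \<le> sum_list p")
    case True
    then obtain i where "i < length p" "tail_sum p (Suc i) < x" "x \<le> tail_sum p i"
      using Cons by auto
    then show ?thesis by (intro exI[of _ "Suc i"]) auto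
  next
    case False
    then show ?thesis using Cons.prems by (intro exI[of _ 0]) auto
  qed
qed simp

lemma sketch_pos_le_sum:
  assumes "\<forall>x\<in>set p. 0 \<le> x" "0 < x" "x \<le> sum_list p"
  shows "0 < sketch p x" "sketch p x \<le> sum_list p"
proof -
  obtain i where i: "i < length p" "tail_sum p (Suc i) < x" "x \<le> tail_sum p i"
    using tail_sum_interval_exists[OF assms] by blast
  have "tail_sum p i = p ! i + tail_sum p (Suc i)"
    using tail_sum_Suc i(1) by blast
  moreover have "0 \<le> tail_sum p (Suc i)" "tail_sum p i \<le> tail_sum p 0"
    using tail_sum_nonneg tail_sum_antimono assms(1) by blast+
  ultimately show "0 < sketch p x" "sketch p x \<le> sum_list p"
    using sketch_eqI[OF assms(1) i] i by auto
qed

text \<open>The sketch lays the states of p out from right to left: the first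
  state occupies the rightmost interval.\<close>
lemma has_integral_sketch:
  assumes "\<forall>x\<in>set p. 0 \<le> x"
  shows "((\<lambda>x. F (sketch p x)) has_integral sum_list (map (\<lambda>a. a * F a) p)) {0..sum_list p}"
  using assms
proof (induction p)
  case Nil
  show ?case using has_integral_refl(1)[of "\<lambda>x. F (sketch [] x)" "0::real"] by simp
next
  case (Cons a p)
  have "0 \<le> a" and p_nonneg: "\<forall>x\<in>set p. 0 \<le> x" using Cons.prems by auto
  have I1: "((\<lambda>x. F (sketch (a # p) x)) has_integral sum_list (map (\<lambda>a. a * F a) p)) {0..sum_list p}"
  proof (rule has_integral_spike_finite[OF _ _ Cons.IH[OF p_nonneg]])
    fix x assume "x \<in> {0..sum_list p} - {0}"
    then have "0 < x" "x \<le> sum_list p" by auto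
    then obtain i where i: "i < length p" "tail_sum p (Suc i) < x" "x \<le> tail_sum p i"
      using tail_sum_interval_exists[OF p_nonneg] by blast
    then have "sketch (a # p) x = (a # p) ! Suc i"
      by (intro sketch_eqI[OF Cons.prems]) auto
    then show "F (sketch (a # p) x) = F (sketch p x)"
      using sketch_eqI[OF p_nonneg i] by simp
  qed simp
  have I2: "((\<lambda>x. F (sketch (a # p) x)) has_integral a * F a) {sum_list p..sum_list p + a}"
  proof (rule has_integral_spike_finite)
    show "((\<lambda>x. F a) has_integral a * F a) {sum_list p..sum_list p + a}"
      using has_integral_const_real[of "F a" "sum_list p" "sum_list p + a"] \<open>0 \<le> a\<close> by simp
    fix x assume "x \<in> {sum_list p..sum_list p + a} - {sum_list p}"
    then have "sketch (a # p) x = (a # p) ! 0"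
      by (intro sketch_eqI[OF Cons.prems]) auto
    then show "F (sketch (a # p) x) = F a" by simp
  qed simp
  have "0 \<le> sum_list p"
    using p_nonneg by (simp add: sum_list_nonneg)
  then have "((\<lambda>x. F (sketch (a # p) x)) has_integral sum_list (map (\<lambda>a. a * F a) p) + a * F a)
      {0..sum_list p + a}"
    using has_integral_combine[OF _ _ I1 I2] \<open>0 \<le> a\<close> by simp
  then show ?case
    by (simp add: add.commute)
qed

section \<open>Step functions\<close>

fun step_sum :: "(real \<Rightarrow> real) \<Rightarrow> real list \<Rightarrow> real" where
  "step_sum f (a # b # cs) = (b - a) * f b + step_sum f (b # cs)"
| "step_sum f _ = 0"

definition piecewise_constant :: "real list \<Rightarrow> (real \<Rightarrow> 'a) \<Rightarrow> bool" where
  "piecewise_constant xs f \<longleftrightarrow>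
     (\<forall>k x. Suc k < length xs \<longrightarrow> xs ! k < x \<longrightarrow> x \<le> xs ! Suc k \<longrightarrow> f x = f (xs ! Suc k))"

lemma piecewise_constant_comp:
  "piecewise_constant xs f \<Longrightarrow> piecewise_constant xs (\<lambda>x. g (f x))"
  unfolding piecewise_constant_def by metis

lemma piecewise_constant_ConsD:
  assumes "piecewise_constant (a # xs) f"
  shows "piecewise_constant xs f"
  unfolding piecewise_constant_def
proof (intro allI impI)
  fix k x assume "Suc k < length xs" "xs ! k < x" "x \<le> xs ! Suc k"
  then show "f x = f (xs ! Suc k)"
    using assms[unfolded piecewise_constant_def, rule_format, of "Suc k" x] by simp
qed

lemma has_integral_step_sum:
  assumes "sorted (a # cs)" "piecewise_constant (a # cs) f"
  shows "(f has_integral step_sum f (a # cs)) {a..last (a # cs)}"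
  using assms
proof (induction cs arbitrary: a)
  case Nil
  show ?case using has_integral_refl(1)[of f a] by simp
next
  case (Cons b cs)
  have "a \<le> b" "b \<le> last (b # cs)"
    using Cons.prems(1) by (auto simp: last_in_set)
  have "(f has_integral (b - a) * f b) {a..b}"
  proof (rule has_integral_spike_finite)
    show "((\<lambda>x. f b) has_integral (b - a) * f b) {a..b}"
      using has_integral_const_real[of "f b" a b] \<open>a \<le> b\<close> by simp
    fix x assume "x \<in> {a..b} - {a}"
    then show "f x = f b"
      using Cons.prems(2)[unfolded piecewise_constant_def, rule_format, of 0 x] by simp
  qed simp
  moreover have "(f has_integral step_sum f (b # cs)) {b..last (b # cs)}"
    using Cons.prems piecewise_constant_ConsD by (intro Cons.IH) auto
  ultimately have "(f has_integral (b - a) * f b + step_sum f (b # cs)) {a..last (b # cs)}"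
    by (rule has_integral_combine[OF \<open>a \<le> b\<close> \<open>b \<le> last (b # cs)\<close>])
  then show ?case by simp
qed

lemma step_sum_mono:
  assumes "sorted (a # cs)" "\<forall>x\<in>set cs. f x \<le> g x"
  shows "step_sum f (a # cs) \<le> step_sum g (a # cs)"
  using assms
proof (induction cs arbitrary: a)
  case (Cons b cs)
  have "(b - a) * f b \<le> (b - a) * g b"
    using Cons.prems by (intro mult_left_mono) auto
  moreover have "step_sum f (b # cs) \<le> step_sum g (b # cs)"
    using Cons by simp
  ultimately show ?case by simp
qed simp

lemma step_sum_add_const:
  "step_sum (\<lambda>x. f x + c) (a # cs) = step_sum f (a # cs) + c * (last (a # cs) - a)"
  by (induction cs arbitrary: a) (simp_all add: algebra_simps)

lemma has_integral_step_sum_parametric: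
  assumes "\<forall>x\<in>set cs. ((\<lambda>s. K s x) has_integral I x) T"
  shows "((\<lambda>s. step_sum (K s) (a # cs)) has_integral step_sum I (a # cs)) T"
  using assms
proof (induction cs arbitrary: a)
  case Nil
  then show ?case using has_integral_0[of T] by simp
next
  case (Cons b cs)
  have "((\<lambda>s. (b - a) * K s b) has_integral (b - a) * I b) T"
    using Cons.prems by (intro has_integral_mult_right) auto
  then show ?case
    using Cons by (simp add: has_integral_add)
qed

section \<open>The profile\<close>

lemma profile_le_sketch: "finite S \<Longrightarrow> p \<in> S \<Longrightarrow> profile S x \<le> sketch p x"
  unfolding profile_def by simp

lemma profile_pos_le_1:
  assumes "finite S" "S \<noteq> {}" "\<forall>p\<in>S. is_dist p" "0 < x" "x \<le> 1"
  shows "0 < profile S x" "profile S x \<le> 1"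
proof -
  have "profile S x \<in> (\<lambda>p. sketch p x) ` S"
    unfolding profile_def using assms(1,2) by (intro Min_in) auto
  then obtain p where "p \<in> S" "profile S x = sketch p x" by blast
  then show "0 < profile S x" "profile S x \<le> 1"
    using sketch_pos_le_sum[of p x] assms is_dist_nonneg is_dist_sum by auto
qed

lemma sketch_eq_if_no_tail_sum_between:
  assumes "\<forall>y\<in>set p. 0 \<le> y" "0 < x" "x \<le> c" "c \<le> sum_list p"
    and "\<forall>i\<le>length p. tail_sum p i \<notin> {x..<c}"
  shows "sketch p x = sketch p c"
proof -
  obtain i where i: "i < length p" "tail_sum p (Suc i) < x" "x \<le> tail_sum p i"
    using tail_sum_interval_exists[OF assms(1,2)] assms(3,4) by auto
  moreover have "tail_sum p i \<notin> {x..<c}"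
    using assms(5) i(1) by simp
  ultimately have "c \<le> tail_sum p i" by auto
  then show ?thesis
    using i assms(3) sketch_eqI[OF assms(1) i] sketch_eqI[OF assms(1), of i c] by simp
qed

definition breakpoints :: "real list set \<Rightarrow> real set" where
  "breakpoints S = (\<Union>p\<in>S. tail_sum p ` {0..length p})"

lemma breakpoints_subset:
  assumes "\<forall>p\<in>S. is_dist p"
  shows "breakpoints S \<subseteq> {0..1}"
proof
  fix y assume "y \<in> breakpoints S"
  then obtain p i where p: "p \<in> S" "i \<le> length p" "y = tail_sum p i"
    unfolding breakpoints_def by auto
  have "0 \<le> tail_sum p i" "tail_sum p i \<le> tail_sum p 0"
    using p assms is_dist_nonneg tail_sum_nonneg tail_sum_antimono by blast+
  then show "y \<in> {0..1}"
    using p assms is_dist_sum by auto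
qed

lemma tail_sum_in_breakpoints: "p \<in> S \<Longrightarrow> i \<le> length p \<Longrightarrow> tail_sum p i \<in> breakpoints S"
  unfolding breakpoints_def by (auto intro!: bexI[of _ p])

lemma breakpoints_contain_0_1:
  assumes "S \<noteq> {}" "\<forall>p\<in>S. is_dist p"
  shows "0 \<in> breakpoints S" "1 \<in> breakpoints S"
proof -
  obtain p where p: "p \<in> S" using assms by blast
  show "0 \<in> breakpoints S"
    using tail_sum_in_breakpoints[OF p, of "length p"] by simp
  show "1 \<in> breakpoints S"
    using tail_sum_in_breakpoints[OF p, of 0] p assms(2) is_dist_sum by simp
qed

lemma sorted_wrt_less_nth_Suc_le:
  fixes L :: "'a::linorder list"
  assumes "sorted_wrt (<) L" "Suc k < length L" "y \<in> set L" "L ! k < y"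
  shows "L ! Suc k \<le> y"
proof -
  have "sorted L" using assms(1) by (rule strict_sorted_imp_sorted)
  obtain j where j: "j < length L" "y = L ! j"
    using assms(3) by (auto simp: in_set_conv_nth)
  have "\<not> j \<le> k"
    using sorted_nth_mono[OF \<open>sorted L\<close>, of j k] assms(2,4) j by auto
  then show ?thesis
    using sorted_nth_mono[OF \<open>sorted L\<close>, of "Suc k" j] j by simp
qed

lemma sorted_le_last: "sorted xs \<Longrightarrow> x \<in> set xs \<Longrightarrow> x \<le> last xs"
  by (induction xs) (auto simp: last_in_set)

lemma profile_eq_if_no_breakpoint_between:
  assumes "finite S" "\<forall>p\<in>S. is_dist p" "0 < x" "x \<le> c" "c \<le> 1"
    and "breakpoints S \<inter> {x..<c} = {}"
  shows "profile S x = profile S c"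
proof -
  have "sketch p x = sketch p c" if "p \<in> S" for p
  proof (rule sketch_eq_if_no_tail_sum_between)
    from tail_sum_in_breakpoints[OF that] show "\<forall>i\<le>length p. tail_sum p i \<notin> {x..<c}"
      using assms(6) by blast
  qed (use assms that is_dist_nonneg is_dist_sum in auto)
  then show ?thesis
    unfolding profile_def by (simp cong: image_cong)
qed

lemma profile_piecewise_constant:
  assumes "finite S" "S \<noteq> {}" "\<forall>p\<in>S. is_dist p"
  obtains cs where "sorted_wrt (<) (0 # cs)" "last (0 # cs) = 1"
    "piecewise_constant (0 # cs) (profile S)"
proof -
  note bounds = breakpoints_subset[OF assms(3)] and ends = breakpoints_contain_0_1[OF assms(2,3)]
  define L where "L = sorted_list_of_set (breakpoints S)"
  have "finite (breakpoints S)"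
    unfolding breakpoints_def using assms(1) by auto
  then have L: "set L = breakpoints S" "sorted_wrt (<) L"
    unfolding L_def by auto
  then obtain h cs where L_eq: "L = h # cs"
    using ends by (cases L) auto
  have "0 \<le> h"
    using L(1) L_eq bounds by auto
  have "0 \<in> set (h # cs)"
    using L(1) L_eq ends(1) by simp
  then have "h \<le> 0"
    using L(2) L_eq by auto
  with \<open>0 \<le> h\<close> have "h = 0" by simp
  have "last L \<le> 1"
    using L(1) L_eq bounds last_in_set[of L] by auto
  moreover have "1 \<le> last L"
    using L ends(2) by (intro sorted_le_last) (auto intro: strict_sorted_imp_sorted)
  ultimately have "last L = 1" by simp
  have "piecewise_constant L (profile S)"
    unfolding piecewise_constant_def
  proof (intro allI impI)
    fix k x assume k: "Suc k < length L" and x: "L ! k < x" "x \<le> L ! Suc k"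
    have "L ! k \<in> {0..1}" "L ! Suc k \<in> {0..1}"
      using k L(1) bounds nth_mem[of k L] nth_mem[of "Suc k" L] by auto
    have "L ! Suc k \<le> y" if "y \<in> breakpoints S" "x \<le> y" for y
      using sorted_wrt_less_nth_Suc_le[OF L(2) k] x(1) that L(1) by simp
    then have "breakpoints S \<inter> {x..<L ! Suc k} = {}"
      by force
    then show "profile S x = profile S (L ! Suc k)"
      using \<open>L ! k \<in> {0..1}\<close> \<open>L ! Suc k \<in> {0..1}\<close> x
      by (intro profile_eq_if_no_breakpoint_between[OF assms(1,3)]) auto
  qed
  then show thesis
    using that L(2) \<open>last L = 1\<close> L_eq \<open>h = 0\<close> by blast
qed

lemma has_integral_le_except_finite:
  fixes f g :: "'a::euclidean_space \<Rightarrow> real"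
  assumes "(f has_integral i) S" "(g has_integral j) S" "finite N"
    and "\<And>x. x \<in> S - N \<Longrightarrow> f x \<le> g x"
  shows "i \<le> j"
proof -
  have "((\<lambda>x. if x \<in> N then 0 else f x) has_integral i) S"
    "((\<lambda>x. if x \<in> N then 0 else g x) has_integral j) S"
    using assms(1,2) by (auto intro: has_integral_spike_finite[OF assms(3)])
  then show ?thesis
    by (rule has_integral_le) (use assms(4) in auto)
qed

lemma kappa_mass_le_profile_integral:
  assumes "finite S" "\<forall>p\<in>S. is_dist p" "p \<in> S" "0 < v"
    and "((\<lambda>x. kappa v (profile S x)) has_integral I) {0..1}"
  shows "kappa_mass v p \<le> I"
proof (rule has_integral_le_except_finite[where N = "{0::real}"])
  have "\<forall>x\<in>set p. 0 \<le> x" "sum_list p = 1"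
    using assms(2,3) is_dist_nonneg is_dist_sum by auto
  then show "((\<lambda>x. kappa v (sketch p x)) has_integral kappa_mass v p) {0..1}"
    using has_integral_sketch[of p "kappa v"] unfolding kappa_mass_def by simp
  fix x :: real assume "x \<in> {0..1} - {0}"
  then have "0 < x" "x \<le> 1" by auto
  have "S \<noteq> {}" using assms(3) by blast
  then have "0 < profile S x" "profile S x \<le> sketch p x"
    using profile_pos_le_1[OF assms(1) _ assms(2) \<open>0 < x\<close> \<open>x \<le> 1\<close>]
      profile_le_sketch[OF assms(1,3)] by auto
  then show "kappa v (sketch p x) \<le> kappa v (profile S x)"
    using kappa_antimono[OF assms(4)] by simp
qed (use assms in auto)

section \<open>Layer cake\<close>

lemma two_powr_neg_log: "0 < a \<Longrightarrow> (2::real) powr (- log 2 (1 / a)) = a"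
  by (simp add: log_divide powr_minus_divide)

lemma has_integral_two_powr_neg:
  fixes a b :: real
  assumes "a \<le> b"
  shows "((\<lambda>s. 2 powr (- s)) has_integral (2 powr (- a) - 2 powr (- b)) / ln 2) {a..b}"
proof -
  have "((\<lambda>s. - exp (- s * ln 2) / ln 2) has_real_derivative exp (- s * ln 2)) (at s within {a..b})"
    for s :: real
    by (auto intro!: derivative_eq_intros)
  then have "((\<lambda>s. exp (- s * ln 2)) has_integral
      (- exp (- b * ln 2) / ln 2 - - exp (- a * ln 2) / ln 2)) {a..b}"
    using assms
    by (intro fundamental_theorem_of_calculus) (simp_all add: has_real_derivative_iff_has_vector_derivative)
  then show ?thesis
    by (simp add: powr_def diff_divide_distrib)
qed

text \<open>With v = 2^-s, kappa v a is 1 for s < log(1/a), 1/2 up to log(1/a) + 1,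
  and v/a after that, whose integral is at most 1/(2 ln 2).\<close>
lemma kappa_two_powr_integral_le:
  assumes "0 < a" "a \<le> 1" "log 2 (1 / a) + 1 \<le> M"
  shows "(\<lambda>s. kappa (2 powr (- s)) a) integrable_on {0..M}"
    "integral {0..M} (\<lambda>s. kappa (2 powr (- s)) a) \<le> log 2 (1 / a) + (1 + log 2 (exp 1)) / 2"
proof -
  define s0 where "s0 = log 2 (1 / a)"
  have "0 \<le> s0" "s0 + 1 \<le> M" unfolding s0_def using assms by simp_all
  have two_powr_s0: "2 powr (- s0) = a"
    unfolding s0_def using two_powr_neg_log assms(1) by simp
  have two_powr_s0_1: "2 powr (- (s0 + 1)) = a / 2"
    using two_powr_s0 powr_diff[of 2 "- s0" 1] by simp
  have head: "((\<lambda>s. kappa (2 powr (- s)) a) has_integral s0) {0..s0}"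
  proof (rule has_integral_spike_finite)
    show "((\<lambda>s. 1) has_integral s0) {0..s0}"
      using has_integral_const_real[of "1::real" 0 s0] \<open>0 \<le> s0\<close> by simp
    fix s assume "s \<in> {0..s0} - {s0}"
    then have "2 powr (- s0) < 2 powr (- s)" by (intro powr_less_mono) auto
    then show "kappa (2 powr (- s)) a = 1" using two_powr_s0 by (simp add: kappa_def)
  qed simp
  have middle: "((\<lambda>s. kappa (2 powr (- s)) a) has_integral 1 / 2) {s0..s0 + 1}"
  proof (rule has_integral_spike_finite)
    show "((\<lambda>s. 1 / 2) has_integral 1 / 2) {s0..s0 + 1}"
      using has_integral_const_real[of "1 / 2" s0 "s0 + 1"] by simp
    fix s assume "s \<in> {s0..s0 + 1} - {}"
    then have "2 powr (- s) \<le> 2 powr (- s0)" "2 powr (- (s0 + 1)) \<le> 2 powr (- s)"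
      by (auto intro: powr_mono)
    then have "2 powr (- s) \<le> a" "a / 2 \<le> 2 powr (- s)"
      using two_powr_s0 two_powr_s0_1 by linarith+
    then have "\<not> a < 2 powr (- s)" "1 / 2 \<le> 2 powr (- s) / a"
      using assms(1) by (simp_all add: field_simps)
    then show "kappa (2 powr (- s)) a = 1 / 2"
      by (simp add: kappa_def)
  qed simp
  have tail: "((\<lambda>s. kappa (2 powr (- s)) a) has_integral (a / 2 - 2 powr (- M)) / ln 2 / a)
      {s0 + 1..M}"
  proof (rule has_integral_spike_finite)
    show "((\<lambda>s. 2 powr (- s) / a) has_integral (a / 2 - 2 powr (- M)) / ln 2 / a) {s0 + 1..M}"
      using has_integral_two_powr_neg[OF \<open>s0 + 1 \<le> M\<close>] unfolding two_powr_s0_1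
      by (rule has_integral_divide)
    fix s assume "s \<in> {s0 + 1..M} - {}"
    then have "2 powr (- s) \<le> 2 powr (- (s0 + 1))"
      by (intro powr_mono) auto
    then have "2 powr (- s) \<le> a / 2"
      using two_powr_s0_1 by linarith
    then show "kappa (2 powr (- s)) a = 2 powr (- s) / a"
      using assms(1) by (auto simp: kappa_def min_def field_simps)
  qed simp
  define J where "J = (a / 2 - 2 powr (- M)) / ln 2 / a"
  have total: "((\<lambda>s. kappa (2 powr (- s)) a) has_integral s0 + 1 / 2 + J) {0..M}"
    using has_integral_combine[OF _ _ has_integral_combine[OF _ _ head middle] tail]
      \<open>0 \<le> s0\<close> \<open>s0 + 1 \<le> M\<close> unfolding J_def by simp
  then show "(\<lambda>s. kappa (2 powr (- s)) a) integrable_on {0..M}"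
    by blast
  have "J \<le> log 2 (exp 1) / 2"
    unfolding J_def using assms(1) by (simp add: log_def field_simps)
  then show "integral {0..M} (\<lambda>s. kappa (2 powr (- s)) a) \<le> log 2 (1 / a) + (1 + log 2 (exp 1)) / 2"
    using integral_unique[OF total] unfolding s0_def by argo
qed

lemma has_integral_two_powr_threshold:
  assumes "0 < g" "g \<le> 1" "log 2 (1 / g) \<le> M"
  shows "((\<lambda>s. if g < 2 powr (- s) then g else 0) has_integral g * log 2 (1 / g)) {0..M}"
proof -
  define s0 where "s0 = log 2 (1 / g)"
  have "0 \<le> s0" unfolding s0_def using assms(1,2) by simp
  have two_powr_s0: "2 powr (- s0) = g"
    unfolding s0_def using two_powr_neg_log assms(1) by simp
  have "((\<lambda>s. if g < 2 powr (- s) then g else 0) has_integral g * s0) {0..s0}"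
  proof (rule has_integral_spike_finite)
    show "((\<lambda>s. g) has_integral g * s0) {0..s0}"
      using has_integral_const_real[of g 0 s0] \<open>0 \<le> s0\<close> by (simp add: mult.commute)
    fix s assume "s \<in> {0..s0} - {s0}"
    then have "2 powr (- s0) < 2 powr (- s)" by (intro powr_less_mono) auto
    then show "(if g < 2 powr (- s) then g else 0) = g" using two_powr_s0 by simp
  qed simp
  moreover have "((\<lambda>s. if g < 2 powr (- s) then g else 0) has_integral 0) {s0..M}"
  proof (rule has_integral_spike_finite)
    fix s assume "s \<in> {s0..M} - {}"
    then have "2 powr (- s) \<le> 2 powr (- s0)" by (intro powr_mono) auto
    then show "(if g < 2 powr (- s) then g else 0) = 0" using two_powr_s0 by simp
  qed simp_all
  ultimately show ?thesis
    using has_integral_combine[of 0 s0 M] \<open>0 \<le> s0\<close> assms(3) unfolding s0_def by fastforce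
qed

lemma mass_below_Cons: "mass_below v (g # G) = (if g < v then g else 0) + mass_below v G"
  by (simp add: mass_below_def)

text \<open>Layer cake: each state g contributes g exactly for s < log(1/g).\<close>
lemma has_integral_mass_below:
  assumes "\<forall>g\<in>set G. 0 < g \<and> g \<le> 1 \<and> log 2 (1 / g) \<le> M"
  shows "((\<lambda>s. mass_below (2 powr (- s)) G) has_integral entropy_list G) {0..M}"
  using assms
proof (induction G)
  case Nil
  then show ?case by (simp add: entropy_list_def mass_below_def)
next
  case (Cons g G)
  have "((\<lambda>s. (if g < 2 powr (- s) then g else 0) + mass_below (2 powr (- s)) G) has_integral
      g * log 2 (1 / g) + entropy_list G) {0..M}"
    using Cons by (intro has_integral_add has_integral_two_powr_threshold) auto
  then show ?case
    by (simp only: mass_below_Cons entropy_list_def list.map sum_list.Cons)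
qed

text \<open>Integrate the bound on mass_below v over v = 2^-s; on the right-hand
  side the integral over s commutes with the finite step sum.\<close>
lemma entropy_list_le_step_sum:
  assumes G: "\<forall>g\<in>set G. 0 < g \<and> g \<le> 1"
    and cs: "sorted_wrt (<) (0 # cs)" "last (0 # cs) = 1"
    and P: "\<forall>x\<in>set cs. 0 < P x \<and> P x \<le> 1"
    and mass: "\<forall>v>0. mass_below v G \<le> step_sum (\<lambda>x. kappa v (P x)) (0 # cs)"
  shows "entropy_list G \<le> step_sum (\<lambda>x. log 2 (1 / P x)) (0 # cs) + (1 + log 2 (exp 1)) / 2"
proof -
  define M where "M = Max (insert 0 ((\<lambda>g. log 2 (1 / g)) ` set G \<union> (\<lambda>x. log 2 (1 / P x) + 1) ` set cs))"
  have M_ge_G: "log 2 (1 / g) \<le> M" if "g \<in> set G" for g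
    unfolding M_def using that by (auto intro: Max_ge)
  have M_ge_P: "log 2 (1 / P x) + 1 \<le> M" if "x \<in> set cs" for x
    unfolding M_def using that by (auto intro: Max_ge)
  define I where "I x = integral {0..M} (\<lambda>s. kappa (2 powr (- s)) (P x))" for x
  have "((\<lambda>s. mass_below (2 powr (- s)) G) has_integral entropy_list G) {0..M}"
    using G M_ge_G by (intro has_integral_mass_below) auto
  moreover have "((\<lambda>s. step_sum (\<lambda>x. kappa (2 powr (- s)) (P x)) (0 # cs)) has_integral
      step_sum I (0 # cs)) {0..M}"
    unfolding I_def using P M_ge_P
    by (intro has_integral_step_sum_parametric ballI integrable_integral kappa_two_powr_integral_le) auto
  ultimately have "entropy_list G \<le> step_sum I (0 # cs)"
    by (rule has_integral_le) (use mass in auto)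
  also have "\<dots> \<le> step_sum (\<lambda>x. log 2 (1 / P x) + (1 + log 2 (exp 1)) / 2) (0 # cs)"
    unfolding I_def using cs(1) P M_ge_P
    by (intro step_sum_mono ballI kappa_two_powr_integral_le) (auto simp: strict_sorted_imp_sorted)
  also have "\<dots> = step_sum (\<lambda>x. log 2 (1 / P x)) (0 # cs) + (1 + log 2 (exp 1)) / 2"
    using step_sum_add_const cs(2) by simp
  finally show ?thesis .
qed

theorem theorem3:
  fixes S :: "real list set"
  assumes "finite S" and "S \<noteq> {}" and "\<forall>p\<in>S. is_dist p"
  shows "entropy_list (greedy_coupling S) \<le> profile_entropy S + (1 + log 2 (exp 1)) / 2"
proof -
  obtain cs where cs: "sorted_wrt (<) (0 # cs)" "last (0 # cs) = 1"
    and step: "piecewise_constant (0 # cs) (profile S)"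
    using profile_piecewise_constant[OF assms] by blast
  have "sorted (0 # cs)"
    using cs(1) by (rule strict_sorted_imp_sorted)
  then have cs_range: "\<forall>x\<in>set cs. 0 < x \<and> x \<le> 1"
    using cs sorted_le_last[of "0 # cs"] by auto
  have profile_integral:
    "((\<lambda>x. F (profile S x)) has_integral step_sum (\<lambda>x. F (profile S x)) (0 # cs)) {0..1}" for F
    using has_integral_step_sum[OF \<open>sorted (0 # cs)\<close> piecewise_constant_comp[OF step]] cs(2)
    by simp
  have "mass_below v (greedy_coupling S) \<le> step_sum (\<lambda>x. kappa v (profile S x)) (0 # cs)"
    if "0 < v" for v
    using mass_below_greedy_coupling_le[OF assms that]
      kappa_mass_le_profile_integral[OF assms(1,3) _ that profile_integral] by fastforce
  then have "entropy_list (greedy_coupling S)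
      \<le> step_sum (\<lambda>x. log 2 (1 / profile S x)) (0 # cs) + (1 + log 2 (exp 1)) / 2"
    using cs cs_range profile_pos_le_1[OF assms] greedy_coupling_pos_le_1[OF assms]
    by (intro entropy_list_le_step_sum) auto
  moreover have "profile_entropy S = step_sum (\<lambda>x. log 2 (1 / profile S x)) (0 # cs)"
    unfolding profile_entropy_def using profile_integral by (rule integral_unique)
  ultimately show ?thesis by simp
qed

end
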